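(* In the setting below, the measure $\mu_P^{(0)}$ is independent of the choice of the disintegrations $\gamma_p^\bullet$ and $\gamma_q^\bullet$: if $\widetilde{\gamma}_p^\bullet,\widetilde{\gamma}_q^\bullet$ is another such pair and $\widetilde{\mu}_P^{(0)}$ the corresponding measure, then $\widetilde{\mu}_P^{(0)}=\mu_P^{(0)}$.
   Context: Setting: $(S,\lambda_S^\bullet,\mu_S^{(0)})$, $(G,\lambda_G^\bullet,\mu_G^{(0)})$, $(T,\lambda_T^\bullet,\mu_T^{(0)})$ are Haar groupoids, i.e. second countable, locally compact, Hausdorff topological groupoids with continuous left Haar systems (systems of measures $\lambda^u$ concentrated on $r^{-1}(u)$, continuous in $u$ against continuous compactly supported $f\ge0$, left invariant $\lambda^{d(x)}(E)=\lambda^{r(x)}(x(E\cap r^{-1}(d(x))))$, positive on open sets meeting $r^{-1}(u)$) and non-zero quasi-invariant Radon measures $\mu^{(0)}$ on the unit spaces (the induced measure $\mu(E)=\int\lambda^u(E)d\mu^{(0)}(u)$ is equivalent to $E\mapsto\mu(E^{-1})$). $p:S\to G$, $q:T\to G$ are homomorphisms of Haar groupoids (continuous homomorphisms preserving the class of the induced measures). $\mu_G$ is the induced measure of $G$. $P^{(0)}=\{(s,g,t)\in S^{(0)}\times G\times T^{(0)}: r_G(g)=p(s),\ d_G(g)=q(t)\}$. A Borel system of measures (BSM) on a Borel map $\pi:X\to Y$ is a family $\{\gamma^y\}$ of positive Borel measures on $X$, $\gamma^y$ concentrated on $\pi^{-1}(y)$, $y\mapsto\gamma^y(E)$ Borel;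 locally finite (resp. locally bounded) if every point has a neighborhood $U$ with $\gamma^y(U)<\infty$ for all $y$ (resp. $\gamma^y(U)<C$ for all $y$, some constant $C$); a disintegration of $\mu$ w.r.t. $\nu$ if $\mu(E)=\int\gamma^y(E)d\nu(y)$. An admissible pair consists of a locally finite, locally bounded BSM $\gamma_p^\bullet$ on $p|_{S^{(0)}}:S^{(0)}\to G^{(0)}$ disintegrating $\mu_S^{(0)}$ w.r.t. $\mu_G^{(0)}$ and a locally finite, locally bounded BSM $\gamma_q^\bullet$ on $q|_{T^{(0)}}:T^{(0)}\to G^{(0)}$ disintegrating $\mu_T^{(0)}$ w.r.t. $\mu_G^{(0)}$. For such a pair, $\eta^x=\gamma_p^{r_G(x)}\times\delta_x\times\gamma_q^{d_G(x)}$ ($x\in G$) as a measure on $P^{(0)}$, and $\mu_P^{(0)}(B)=\int_G\eta^x(B)\,d\mu_G(x)$ for Borel $B\subseteq P^{(0)}$. *)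

theory Defs
  imports "HOL-Analysis.Analysis" "HOL-Probability.Probability"
begin

text \<open>A groupoid is encoded on a whole type 'g: range map r, source (domain) map d,
  partial multiplication m (x,y composable iff d x = r y), inverse i.\<close>

definition groupoid :: "('g \<Rightarrow> 'g) \<Rightarrow> ('g \<Rightarrow> 'g) \<Rightarrow> ('g \<Rightarrow> 'g \<Rightarrow> 'g) \<Rightarrow> ('g \<Rightarrow> 'g) \<Rightarrow> bool" where
  "groupoid r d m i \<longleftrightarrow>
     (\<forall>x. r (r x) = r x \<and> d (r x) = r x \<and> r (d x) = d x \<and> d (d x) = d x) \<and>
     (\<forall>x y. d x = r y \<longrightarrow> r (m x y) = r x \<and> d (m x y) = d y) \<and>
     (\<forall>x y z. d x = r y \<and> d y = r z \<longrightarrow> m (m x y) z = m x (m y z)) \<and>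
     (\<forall>x. m (r x) x = x \<and> m x (d x) = x) \<and>
     (\<forall>x. r (i x) = d x \<and> d (i x) = r x \<and> m x (i x) = r x \<and> m (i x) x = d x)"

definition gunits :: "('g \<Rightarrow> 'g) \<Rightarrow> 'g set" where
  "gunits r = range r"

definition topological_groupoid ::
  "('g::{t2_space,second_countable_topology} \<Rightarrow> 'g) \<Rightarrow> ('g \<Rightarrow> 'g) \<Rightarrow> ('g \<Rightarrow> 'g \<Rightarrow> 'g) \<Rightarrow> ('g \<Rightarrow> 'g) \<Rightarrow> bool" where
  "topological_groupoid r d m i \<longleftrightarrow> groupoid r d m i \<and>
     locally_compact_space (euclidean :: 'g topology) \<and>
     continuous_on UNIV r \<and> continuous_on UNIV d \<and> continuous_on UNIV i \<and>
     continuous_on {(x, y). d x = r y} (\<lambda>(x, y). m x y)"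

definition haar_system ::
  "('g::{t2_space,second_countable_topology} \<Rightarrow> 'g) \<Rightarrow> ('g \<Rightarrow> 'g) \<Rightarrow> ('g \<Rightarrow> 'g \<Rightarrow> 'g) \<Rightarrow> ('g \<Rightarrow> 'g measure) \<Rightarrow> bool" where
  "haar_system r d m lam \<longleftrightarrow>
     (\<forall>u\<in>gunits r. sets (lam u) = sets borel \<and>
        emeasure (lam u) (UNIV - r -` {u}) = 0 \<and>
        (\<forall>K. compact K \<longrightarrow> emeasure (lam u) K < \<infinity>) \<and>
        (\<forall>V. open V \<and> V \<inter> r -` {u} \<noteq> {} \<longrightarrow> emeasure (lam u) V > 0)) \<and>
     (\<forall>f :: 'g \<Rightarrow> real. continuous_on UNIV f \<and> compact (closure {x. f x \<noteq> 0}) \<and> (\<forall>x. f x \<ge> 0)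
        \<longrightarrow> continuous_on (gunits r) (\<lambda>u. integral\<^sup>L (lam u) f)) \<and>
     (\<forall>x. \<forall>E\<in>sets borel. emeasure (lam (d x)) E = emeasure (lam (r x)) (m x ` (E \<inter> r -` {d x})))"

definition induced_measure :: "('g::topological_space \<Rightarrow> 'g measure) \<Rightarrow> 'g measure \<Rightarrow> 'g measure" where
  "induced_measure lam mu0 = measure_of UNIV (sets borel) (\<lambda>E. \<integral>\<^sup>+ u. emeasure (lam u) E \<partial>mu0)"

text \<open>Non-zero quasi-invariant Radon measure on the unit space (a Borel measure on 'g
  concentrated on G^(0)).\<close>
definition quasi_invariant ::
  "('g::{t2_space,second_countable_topology} \<Rightarrow> 'g) \<Rightarrow> ('g \<Rightarrow> 'g) \<Rightarrow> ('g \<Rightarrow> 'g measure) \<Rightarrow> 'g measure \<Rightarrow> bool" where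
  "quasi_invariant r i lam mu0 \<longleftrightarrow>
     sets mu0 = sets borel \<and> emeasure mu0 (UNIV - gunits r) = 0 \<and>
     (\<forall>K. compact K \<longrightarrow> emeasure mu0 K < \<infinity>) \<and> emeasure mu0 UNIV \<noteq> 0 \<and>
     (\<forall>E\<in>sets borel. emeasure (induced_measure lam mu0) E = 0 \<longleftrightarrow>
                      emeasure (induced_measure lam mu0) (i -` E) = 0)"

definition haar_groupoid ::
  "('g::{t2_space,second_countable_topology} \<Rightarrow> 'g) \<Rightarrow> ('g \<Rightarrow> 'g) \<Rightarrow> ('g \<Rightarrow> 'g \<Rightarrow> 'g) \<Rightarrow> ('g \<Rightarrow> 'g)
     \<Rightarrow> ('g \<Rightarrow> 'g measure) \<Rightarrow> 'g measure \<Rightarrow> bool" where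
  "haar_groupoid r d m i lam mu0 \<longleftrightarrow>
     topological_groupoid r d m i \<and> haar_system r d m lam \<and> quasi_invariant r i lam mu0"

text \<open>Homomorphism of Haar groupoids: continuous groupoid homomorphism p such that
  the image of the class of \<mu>_S is the class of \<mu>_G (E is \<mu>_G-null iff p^{-1}(E) is \<mu>_S-null).\<close>
definition haar_hom ::
  "('s::{t2_space,second_countable_topology} \<Rightarrow> 's) \<Rightarrow> ('s \<Rightarrow> 's) \<Rightarrow> ('s \<Rightarrow> 's \<Rightarrow> 's) \<Rightarrow> ('s \<Rightarrow> 's measure) \<Rightarrow> 's measure
   \<Rightarrow> ('g::{t2_space,second_countable_topology} \<Rightarrow> 'g) \<Rightarrow> ('g \<Rightarrow> 'g) \<Rightarrow> ('g \<Rightarrow> 'g \<Rightarrow> 'g) \<Rightarrow> ('g \<Rightarrow> 'g measure) \<Rightarrow> 'g measure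
   \<Rightarrow> ('s \<Rightarrow> 'g) \<Rightarrow> bool" where
  "haar_hom rS dS mS lamS muS0 rG dG mG lamG muG0 p \<longleftrightarrow>
     continuous_on UNIV p \<and>
     (\<forall>x y. dS x = rS y \<longrightarrow> dG (p x) = rG (p y) \<and> p (mS x y) = mG (p x) (p y)) \<and>
     (\<forall>E\<in>sets borel. emeasure (induced_measure lamG muG0) E = 0 \<longleftrightarrow>
                      emeasure (induced_measure lamS muS0) (p -` E) = 0)"

text \<open>Borel system of measures on the map \<pi> : X0 \<rightarrow> Y0 (measures on X0 are represented as
  Borel measures on the ambient type concentrated on X0).\<close>
definition bsm :: "'x::topological_space set \<Rightarrow> 'y::topological_space set \<Rightarrow> ('x \<Rightarrow> 'y) \<Rightarrow> ('y \<Rightarrow> 'x measure) \<Rightarrow> bool" where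
  "bsm X0 Y0 \<pi> \<gamma> \<longleftrightarrow>
     (\<forall>y\<in>Y0. sets (\<gamma> y) = sets borel \<and> emeasure (\<gamma> y) (UNIV - {x\<in>X0. \<pi> x = y}) = 0) \<and>
     (\<forall>E\<in>sets borel. (\<lambda>y. emeasure (\<gamma> y) E) \<in> borel_measurable (restrict_space borel Y0))"

definition bsm_locally_finite :: "'x::topological_space set \<Rightarrow> 'y set \<Rightarrow> ('y \<Rightarrow> 'x measure) \<Rightarrow> bool" where
  "bsm_locally_finite X0 Y0 \<gamma> \<longleftrightarrow>
     (\<forall>x\<in>X0. \<exists>U. open U \<and> x \<in> U \<and> (\<forall>y\<in>Y0. emeasure (\<gamma> y) U < \<infinity>))"

definition bsm_locally_bounded :: "'x::topological_space set \<Rightarrow> 'y set \<Rightarrow> ('y \<Rightarrow> 'x measure) \<Rightarrow> bool" where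
  "bsm_locally_bounded X0 Y0 \<gamma> \<longleftrightarrow>
     (\<forall>x\<in>X0. \<exists>U C. open U \<and> x \<in> U \<and> (\<forall>y\<in>Y0. emeasure (\<gamma> y) U < ennreal C))"

definition disintegration :: "'x::topological_space set \<Rightarrow> ('y \<Rightarrow> 'x measure) \<Rightarrow> 'x measure \<Rightarrow> 'y measure \<Rightarrow> bool" where
  "disintegration X0 \<gamma> \<mu> \<nu> \<longleftrightarrow>
     (\<forall>E\<in>sets borel. E \<subseteq> X0 \<longrightarrow> emeasure \<mu> E = (\<integral>\<^sup>+ y. emeasure (\<gamma> y) E \<partial>\<nu>))"

definition admissible_bsm ::
  "('s::topological_space \<Rightarrow> 's) \<Rightarrow> 's measure \<Rightarrow> ('g::topological_space \<Rightarrow> 'g) \<Rightarrow> 'g measure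
     \<Rightarrow> ('s \<Rightarrow> 'g) \<Rightarrow> ('g \<Rightarrow> 's measure) \<Rightarrow> bool" where
  "admissible_bsm rS muS0 rG muG0 p \<gamma> \<longleftrightarrow>
     bsm (gunits rS) (gunits rG) p \<gamma> \<and>
     bsm_locally_finite (gunits rS) (gunits rG) \<gamma> \<and>
     bsm_locally_bounded (gunits rS) (gunits rG) \<gamma> \<and>
     disintegration (gunits rS) \<gamma> muS0 muG0"

definition P0 :: "('s \<Rightarrow> 's) \<Rightarrow> ('g \<Rightarrow> 'g) \<Rightarrow> ('g \<Rightarrow> 'g) \<Rightarrow> ('t \<Rightarrow> 't) \<Rightarrow> ('s \<Rightarrow> 'g) \<Rightarrow> ('t \<Rightarrow> 'g)
    \<Rightarrow> ('s \<times> 'g \<times> 't) set" where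
  "P0 rS rG dG rT p q = {(s, g, t). s \<in> gunits rS \<and> t \<in> gunits rT \<and> rG g = p s \<and> dG g = q t}"

definition eta :: "('g::topological_space \<Rightarrow> 'g) \<Rightarrow> ('g \<Rightarrow> 'g) \<Rightarrow> ('g \<Rightarrow> 's measure) \<Rightarrow> ('g \<Rightarrow> 't measure)
    \<Rightarrow> 'g \<Rightarrow> ('s \<times> 'g \<times> 't) measure" where
  "eta rG dG \<gamma>p \<gamma>q x = \<gamma>p (rG x) \<Otimes>\<^sub>M (return borel x \<Otimes>\<^sub>M \<gamma>q (dG x))"

definition muP0 :: "('g::topological_space \<Rightarrow> 'g) \<Rightarrow> ('g \<Rightarrow> 'g) \<Rightarrow> ('g \<Rightarrow> 'g measure) \<Rightarrow> 'g measure
    \<Rightarrow> ('g \<Rightarrow> 's measure) \<Rightarrow> ('g \<Rightarrow> 't measure) \<Rightarrow> ('s \<times> 'g \<times> 't) set \<Rightarrow> ennreal" where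
  "muP0 rG dG lamG muG0 \<gamma>p \<gamma>q B = (\<integral>\<^sup>+ x. emeasure (eta rG dG \<gamma>p \<gamma>q x) B \<partial>induced_measure lamG muG0)"

end

theory Submission
  imports Defs
begin

text \<open>The two admissible pairs disintegrate the same measures, and disintegrations
  along a continuous map are unique almost everywhere: two of them give the same
  integral over every set \<open>E \<inter> p\<^sup>-\<^sup>1(A)\<close>, hence agree almost everywhere on each set of
  a countable intersection-stable generator of the Borel sets, and local finiteness
  lets that generator contain a cover by sets of finite measure. So \<open>\<gamma>p' = \<gamma>p\<close> and
  \<open>\<gamma>q' = \<gamma>q\<close> off a \<open>\<mu>\<^sub>G\<^sup>(\<^sup>0\<^sup>)\<close>-null set \<open>N\<close>. Each \<open>\<lambda>\<^sup>u\<close> lives on \<open>r\<^sup>-\<^sup>1(u)\<close>, so \<open>r\<^sup>-\<^sup>1(N)\<close> is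
  \<open>\<mu>\<^sub>G\<close>-null, and so is \<open>d\<^sup>-\<^sup>1(N) = i\<^sup>-\<^sup>1(r\<^sup>-\<^sup>1(N))\<close> by quasi-invariance. Hence \<open>\<eta>\<^sup>x\<close> is the
  same for both pairs for \<open>\<mu>\<^sub>G\<close>-almost every \<open>x\<close>.\<close>

lemma gunits_eq_fixpoints:
  assumes "groupoid r d m i"
  shows "gunits r = {x. r x = x}"
  using assms unfolding gunits_def groupoid_def by (auto intro: range_eqI[OF sym])

lemma closed_gunits:
  fixes r :: "'a::t2_space \<Rightarrow> 'a"
  assumes "groupoid r d m i" "continuous_on UNIV r"
  shows "closed (gunits r)"
  unfolding gunits_eq_fixpoints[OF assms(1)]
  using closed_Collect_eq[OF assms(2) continuous_on_id] by simp

lemma sigma_finite_measure_if_finite_on_compacts: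
  fixes M :: "'a::{t2_space,second_countable_topology} measure"
  assumes lc: "locally_compact_space (euclidean :: 'a topology)"
    and sets_M: "sets M = sets borel" and fin: "\<And>K. compact K \<Longrightarrow> emeasure M K < \<infinity>"
  shows "sigma_finite_measure M"
proof
  have "\<exists>K. compact K \<and> x \<in> interior K" for x :: 'a
  proof -
    have "\<exists>U K. open U \<and> compact K \<and> x \<in> U \<and> U \<subseteq> K"
      using lc unfolding locally_compact_space_def by simp
    then obtain U K where "open U" "compact K" "x \<in> U" "U \<subseteq> K" by blast
    then show ?thesis by (meson interior_maximal subsetD)
  qed
  then obtain K :: "'a \<Rightarrow> 'a set" where K: "\<And>x. compact (K x)" "\<And>x. x \<in> interior (K x)"
    by metis
  obtain F where F: "F \<subseteq> (interior \<circ> K) ` UNIV" "countable F" "\<Union>F = \<Union>((interior \<circ> K) ` UNIV)"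
    using Lindelof[of "(interior \<circ> K) ` UNIV"] by auto
  then obtain X where X: "countable X" "F = (interior \<circ> K) ` X"
    using countable_subset_image[of F "interior \<circ> K" UNIV] by blast
  have "\<Union>(K ` X) = UNIV"
  proof -
    have "\<Union>((interior \<circ> K) ` UNIV) = UNIV"
      using K(2) by auto
    then have "\<Union>((interior \<circ> K) ` X) = UNIV"
      using F(3) X(2) by simp
    then show ?thesis
      using interior_subset by fastforce
  qed
  moreover have "space M = UNIV"
    using sets_eq_imp_space_eq[OF sets_M] by simp
  moreover have "K ` X \<subseteq> sets M"
    using K(1) sets_M by (auto intro: borel_closed compact_imp_closed)
  ultimately show "\<exists>A. countable A \<and> A \<subseteq> sets M \<and> \<Union>A = space M \<and> (\<forall>a\<in>A. emeasure M a \<noteq> \<infinity>)"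
    using X(1) K(1) fin by (intro exI[of _ "K ` X"]) (auto simp: less_top)
qed

lemma countable_Int_stable_open_generator:
  fixes A :: "'a::second_countable_topology set set"
  assumes "countable A" and open_A: "\<And>a. a \<in> A \<Longrightarrow> open a"
  obtains C where "countable C" "Int_stable C" "A \<subseteq> C" "\<And>c. c \<in> C \<Longrightarrow> open c"
    "sets borel = sigma_sets UNIV C"
proof -
  obtain B :: "'a set set" where B: "countable B" "topological_basis B"
    using ex_countable_basis by blast
  define C where "C = (\<lambda>xs. \<Inter>(set xs)) ` lists (B \<union> A)"
  have singletons: "B \<union> A \<subseteq> C"
  proof
    fix a assume "a \<in> B \<union> A"
    then show "a \<in> C"
      unfolding C_def by (intro image_eqI[where x="[a]"]) auto
  qed
  have open_C: "open c" if "c \<in> C" for c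
  proof -
    obtain xs where "set xs \<subseteq> B \<union> A" "c = \<Inter>(set xs)"
      using \<open>c \<in> C\<close> unfolding C_def by (auto simp: in_lists_conv_set)
    moreover have "\<forall>b\<in>B \<union> A. open b"
      using open_A topological_basis_open[OF B(2)] by auto
    ultimately show ?thesis
      by (auto intro!: open_Inter)
  qed
  have "Int_stable C"
    unfolding C_def
  proof (rule Int_stableI_image)
    fix xs ys assume "xs \<in> lists (B \<union> A)" "ys \<in> lists (B \<union> A)"
    then show "\<exists>zs\<in>lists (B \<union> A). \<Inter>(set xs) \<inter> \<Inter>(set ys) = \<Inter>(set zs)"
      by (intro bexI[of _ "xs @ ys"]) auto
  qed
  moreover have "sets borel = sigma_sets UNIV C"
  proof
    have "sets borel = sigma_sets UNIV B"
      by (subst borel_eq_countable_basis[OF B]) (simp add: sets_measure_of)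
    also have "\<dots> \<subseteq> sigma_sets UNIV C"
      using singletons by (intro sigma_sets_mono') auto
    finally show "sets borel \<subseteq> sigma_sets UNIV C" .
    have "C \<subseteq> sets borel"
      using open_C by auto
    then show "sigma_sets UNIV C \<subseteq> sets borel"
      using sets.sigma_sets_subset[of C borel] by simp
  qed
  moreover have "countable C"
    unfolding C_def using B(1) assms(1) by simp
  ultimately show thesis
    using that singletons open_C by blast
qed

lemma null_sets_outside_fibre:
  fixes p :: "'x::topological_space \<Rightarrow> 'y::t2_space"
  assumes "bsm X0 Y0 p \<gamma>" "y \<in> Y0" "closed X0" "continuous_on UNIV p"
  shows "UNIV - {x\<in>X0. p x = y} \<in> null_sets (\<gamma> y)"
proof -
  have sets_\<gamma>: "sets (\<gamma> y) = sets borel"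
    and null: "emeasure (\<gamma> y) (UNIV - {x\<in>X0. p x = y}) = 0"
    using assms(1,2) unfolding bsm_def by auto
  have "UNIV - {x\<in>X0. p x = y} = - (X0 \<inter> p -` {y})"
    by auto
  moreover have "open (- (X0 \<inter> p -` {y}))"
    by (intro open_Compl closed_Int assms(3) closed_vimage assms(4) closed_singleton)
  ultimately have "UNIV - {x\<in>X0. p x = y} \<in> sets (\<gamma> y)"
    unfolding sets_\<gamma> by simp
  with null show ?thesis
    by (rule null_setsI)
qed

lemma emeasure_Int_fibre_vimage:
  fixes p :: "'x::topological_space \<Rightarrow> 'y::t2_space"
  assumes "bsm X0 Y0 p \<gamma>" "y \<in> Y0" "closed X0" "continuous_on UNIV p"
    and E: "E \<in> sets borel" and F: "F \<in> sets borel"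
  shows "emeasure (\<gamma> y) (E \<inter> X0 \<inter> p -` F) = emeasure (\<gamma> y) E * indicator F y"
proof -
  have sets_\<gamma>: "sets (\<gamma> y) = sets borel"
    using assms(1,2) unfolding bsm_def by auto
  note null = null_sets_outside_fibre[OF assms(1-4)]
  have "p -` F \<in> sets borel"
    using measurable_sets[OF borel_measurable_continuous_onI[OF assms(4)] F] by simp
  then have EF: "E \<inter> X0 \<inter> p -` F \<in> sets (\<gamma> y)"
    using E assms(3) sets_\<gamma> by auto
  show ?thesis
  proof (cases "y \<in> F")
    case True
    have "AE x in \<gamma> y. x \<in> E \<inter> X0 \<inter> p -` F \<longleftrightarrow> x \<in> E"
      using AE_not_in[OF null] by eventually_elim (use True in auto)
    then show ?thesis
      using True EF E sets_\<gamma> by (simp add: emeasure_eq_AE)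
  next
    case False
    then have "E \<inter> X0 \<inter> p -` F \<subseteq> UNIV - {x\<in>X0. p x = y}" by auto
    then have "E \<inter> X0 \<inter> p -` F \<in> null_sets (\<gamma> y)"
      by (rule null_sets_subset[OF null EF])
    then show ?thesis
      using False by (auto dest: null_setsD1)
  qed
qed

lemma borel_measurable_bsm_emeasure:
  assumes "bsm X0 Y0 p \<gamma>" "Y0 \<in> sets borel" "E \<in> sets borel"
  shows "(\<lambda>y. emeasure (\<gamma> y) E * indicator Y0 y) \<in> borel_measurable borel"
  using assms borel_measurable_restrict_space_iff_ennreal[of Y0 borel] unfolding bsm_def by simp

lemma AE_emeasure_eq_if_disintegrations:
  fixes p :: "'x::topological_space \<Rightarrow> 'y::t2_space"
  assumes sets_\<nu>: "sets \<nu> = sets borel" and "sigma_finite_measure \<nu>"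
    and Y0: "Y0 \<in> sets borel" "AE y in \<nu>. y \<in> Y0"
    and X0: "closed X0" and p: "continuous_on UNIV p"
    and bsm: "bsm X0 Y0 p \<gamma>" "bsm X0 Y0 p \<gamma>'"
    and disint: "disintegration X0 \<gamma> \<mu> \<nu>" "disintegration X0 \<gamma>' \<mu> \<nu>"
    and E: "E \<in> sets borel"
  shows "AE y in \<nu>. emeasure (\<gamma> y) E = emeasure (\<gamma>' y) E"
proof -
  define f where "f \<kappa> y = emeasure (\<kappa> y) E * indicator Y0 y" for \<kappa> :: "'y \<Rightarrow> 'x measure" and y
  have f_measurable: "f \<gamma> \<in> borel_measurable \<nu>" "f \<gamma>' \<in> borel_measurable \<nu>"
    unfolding f_def measurable_cong_sets[OF sets_\<nu> refl]
    using borel_measurable_bsm_emeasure[OF _ Y0(1) E] bsm by auto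
  have "AE y in \<nu>. f \<gamma> y = f \<gamma>' y"
  proof (rule sigma_finite_measure.density_unique2[OF assms(2) f_measurable])
    fix A assume "A \<in> sets \<nu>"
    then have A: "A \<in> sets borel" using sets_\<nu> by simp
    have "p -` A \<in> sets borel"
      using measurable_sets[OF borel_measurable_continuous_onI[OF p] A] by simp
    then have EA: "E \<inter> X0 \<inter> p -` A \<in> sets borel" "E \<inter> X0 \<inter> p -` A \<subseteq> X0"
      using E X0 by auto
    have "(\<integral>\<^sup>+ y \<in> A. f \<kappa> y \<partial>\<nu>) = emeasure \<mu> (E \<inter> X0 \<inter> p -` A)"
      if "bsm X0 Y0 p \<kappa>" "disintegration X0 \<kappa> \<mu> \<nu>" for \<kappa>
    proof -
      have "(\<integral>\<^sup>+ y \<in> A. f \<kappa> y \<partial>\<nu>) = (\<integral>\<^sup>+ y. emeasure (\<kappa> y) (E \<inter> X0 \<inter> p -` A) \<partial>\<nu>)"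
        using Y0(2) by (intro nn_integral_cong_AE, eventually_elim)
          (simp add: f_def emeasure_Int_fibre_vimage[OF that(1) _ X0 p E A] mult.commute)
      also have "\<dots> = emeasure \<mu> (E \<inter> X0 \<inter> p -` A)"
        using that(2) EA unfolding disintegration_def by simp
      finally show ?thesis .
    qed
    then show "(\<integral>\<^sup>+ y \<in> A. f \<gamma> y \<partial>\<nu>) = (\<integral>\<^sup>+ y \<in> A. f \<gamma>' y \<partial>\<nu>)"
      using bsm disint by simp
  qed
  then show ?thesis
    using Y0(2) by eventually_elim (simp add: f_def)
qed

text \<open>Only \<open>\<gamma>\<close> needs to be locally finite: the complement of the closed set \<open>X0\<close> together
  with countably many open sets of finite \<open>\<gamma> y\<close>-measure covers the space, and all of these
  sets go into the generator.\<close>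

lemma AE_eq_if_disintegrations:
  fixes p :: "'x::second_countable_topology \<Rightarrow> 'y::t2_space"
  assumes \<nu>: "sets \<nu> = sets borel" "sigma_finite_measure \<nu>"
    and Y0: "Y0 \<in> sets borel" "AE y in \<nu>. y \<in> Y0"
    and X0: "closed X0" and p: "continuous_on UNIV p"
    and bsm: "bsm X0 Y0 p \<gamma>" "bsm X0 Y0 p \<gamma>'" and fin: "bsm_locally_finite X0 Y0 \<gamma>"
    and disint: "disintegration X0 \<gamma> \<mu> \<nu>" "disintegration X0 \<gamma>' \<mu> \<nu>"
  shows "AE y in \<nu>. \<gamma>' y = \<gamma> y"
proof -
  let ?U = "{U. open U \<and> (\<forall>y\<in>Y0. emeasure (\<gamma> y) U < \<infinity>)}"
  obtain U where U: "U \<subseteq> ?U" "countable U" "\<Union>U = \<Union>?U"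
    using Lindelof[of ?U] by auto
  have "X0 \<subseteq> \<Union>?U"
    using fin unfolding bsm_locally_finite_def by blast
  define A where "A = insert (- X0) U"
  have A_countable: "countable A" and A_open: "\<And>a. a \<in> A \<Longrightarrow> open a"
    using U X0 unfolding A_def by auto
  obtain C :: "'x set set" where C: "countable C" "Int_stable C" "A \<subseteq> C" "\<And>c. c \<in> C \<Longrightarrow> open c"
    "sets borel = sigma_sets UNIV C"
    using countable_Int_stable_open_generator[OF A_countable A_open] by blast
  have "AE y in \<nu>. \<forall>E\<in>C. emeasure (\<gamma> y) E = emeasure (\<gamma>' y) E"
    using C(4)
    by (subst AE_ball_countable[OF C(1)])
      (auto intro!: AE_emeasure_eq_if_disintegrations[OF \<nu> Y0 X0 p bsm disint])
  with Y0(2) show ?thesis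
  proof eventually_elim
    case (elim y)
    have sets_y: "sets (\<gamma> y) = sigma_sets UNIV C" "sets (\<gamma>' y) = sigma_sets UNIV C"
      using bsm elim(1) C(5) unfolding bsm_def by auto
    have "- X0 \<in> sets (\<gamma> y)"
      using sets_y(1) C(5) X0 by auto
    then have "- X0 \<in> null_sets (\<gamma> y)"
      by (rule null_sets_subset[OF null_sets_outside_fibre[OF bsm(1) elim(1) X0 p]]) auto
    then have finite_A: "emeasure (\<gamma> y) a \<noteq> \<infinity>" if "a \<in> A" for a
      using that U(1) elim(1) unfolding A_def by (fastforce dest: null_setsD1)
    have "\<Union>A = UNIV"
      using \<open>X0 \<subseteq> \<Union>?U\<close> U(3) unfolding A_def by auto
    have "\<gamma> y = \<gamma>' y"
      by (rule measure_eqI_generator_eq_countable[OF C(2) _ _ sets_y C(3) \<open>\<Union>A = UNIV\<close>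
            A_countable finite_A]) (use elim(2) in auto)
    then show "\<gamma>' y = \<gamma> y" ..
  qed
qed

lemma closed_gunits_haar_groupoid:
  assumes "haar_groupoid r d m i lam mu0"
  shows "closed (gunits r)"
  using assms closed_gunits unfolding haar_groupoid_def topological_groupoid_def by blast

lemma AE_in_gunits:
  assumes "haar_groupoid r d m i lam mu0"
  shows "AE u in mu0. u \<in> gunits r"
  using assms closed_gunits_haar_groupoid[OF assms] unfolding haar_groupoid_def quasi_invariant_def
  by (intro AE_I'[where N="UNIV - gunits r"]) (auto simp: sets_eq_imp_space_eq)

lemma AE_eq_admissible_bsm:
  fixes p :: "'s::{t2_space,second_countable_topology} \<Rightarrow> 'g::{t2_space,second_countable_topology}"
  assumes S: "haar_groupoid rS dS mS iS lamS muS0" and G: "haar_groupoid rG dG mG iG lamG muG0"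
    and p: "haar_hom rS dS mS lamS muS0 rG dG mG lamG muG0 p"
    and "admissible_bsm rS muS0 rG muG0 p \<gamma>" "admissible_bsm rS muS0 rG muG0 p \<gamma>'"
  shows "AE y in muG0. \<gamma>' y = \<gamma> y"
proof (rule AE_eq_if_disintegrations)
  have "locally_compact_space (euclidean :: 'g topology)" "quasi_invariant rG iG lamG muG0"
    using G unfolding haar_groupoid_def topological_groupoid_def by auto
  then show "sets muG0 = sets borel" "sigma_finite_measure muG0"
    unfolding quasi_invariant_def by (auto intro: sigma_finite_measure_if_finite_on_compacts)
  show "gunits rG \<in> sets borel" "closed (gunits rS)"
    using closed_gunits_haar_groupoid[OF S] closed_gunits_haar_groupoid[OF G] by auto
  show "AE y in muG0. y \<in> gunits rG"
    using G by (rule AE_in_gunits)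
  show "continuous_on UNIV p"
    using p unfolding haar_hom_def by blast
qed (use assms(4,5) in \<open>auto simp: admissible_bsm_def\<close>)

lemma sets_induced_measure [simp]: "sets (induced_measure lam mu0) = sets borel"
  unfolding induced_measure_def using sets.sigma_sets_eq[of borel] by (simp add: sets_measure_of_conv)

lemma null_sets_induced_measure_vimage_range:
  assumes G: "haar_groupoid r d m i lam mu0" and N: "N \<in> null_sets mu0"
  shows "r -` N \<in> null_sets (induced_measure lam mu0)"
proof -
  have r: "continuous_on UNIV r" and lam: "haar_system r d m lam"
    and mu0: "sets mu0 = sets borel"
    using G unfolding haar_groupoid_def topological_groupoid_def quasi_invariant_def by auto
  have "AE u in mu0. emeasure (lam u) (r -` N) = 0"
    using AE_in_gunits[OF G] AE_not_in[OF N]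
  proof eventually_elim
    case (elim u)
    have "emeasure (lam u) (- r -` {u}) = 0" "sets (lam u) = sets borel"
      using lam elim(1) unfolding haar_system_def by (auto simp: Compl_eq_Diff_UNIV)
    moreover have "open (- r -` {u})"
      by (intro open_Compl closed_vimage r closed_singleton)
    moreover have "r -` N \<subseteq> - r -` {u}"
      using elim(2) by auto
    ultimately show ?case
      by (metis borel_open emeasure_mono le_zero_eq)
  qed
  then have "(\<integral>\<^sup>+ u. emeasure (lam u) (r -` N) \<partial>mu0) = 0"
    by (simp add: nn_integral_cong_AE)
  moreover have "emeasure (induced_measure lam mu0) E \<le> (\<integral>\<^sup>+ u. emeasure (lam u) E \<partial>mu0)" for E
    unfolding induced_measure_def by (auto simp: emeasure_measure_of_conv)
  ultimately have "emeasure (induced_measure lam mu0) (r -` N) = 0"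
    by (metis le_zero_eq)
  moreover have "r -` N \<in> sets borel"
    using N mu0 measurable_sets[OF borel_measurable_continuous_onI[OF r]] by auto
  ultimately show ?thesis
    by (intro null_setsI) simp_all
qed

lemma null_sets_induced_measure_vimage_domain:
  assumes G: "haar_groupoid r d m i lam mu0" and N: "N \<in> null_sets mu0"
  shows "d -` N \<in> null_sets (induced_measure lam mu0)"
proof -
  have i: "continuous_on UNIV i" and d: "d -` N = i -` (r -` N)"
    and quasi_inv: "\<forall>E\<in>sets borel. emeasure (induced_measure lam mu0) E = 0 \<longleftrightarrow>
                      emeasure (induced_measure lam mu0) (i -` E) = 0"
    using G unfolding haar_groupoid_def topological_groupoid_def groupoid_def quasi_invariant_def
    by auto
  have "r -` N \<in> null_sets (induced_measure lam mu0)"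
    using G N by (rule null_sets_induced_measure_vimage_range)
  then have "emeasure (induced_measure lam mu0) (i -` (r -` N)) = 0"
    using quasi_inv by (metis null_setsD1 null_setsD2 sets_induced_measure)
  moreover have "i -` (r -` N) \<in> sets borel"
    using \<open>r -` N \<in> null_sets _\<close> measurable_sets[OF borel_measurable_continuous_onI[OF i]] by auto
  ultimately show ?thesis
    unfolding d by (intro null_setsI) simp_all
qed

lemma AE_induced_measure_range_domain:
  assumes G: "haar_groupoid r d m i lam mu0" and P: "AE u in mu0. P u"
  shows "AE x in induced_measure lam mu0. P (r x) \<and> P (d x)"
proof -
  obtain N where N: "{u \<in> space mu0. \<not> P u} \<subseteq> N" "N \<in> null_sets mu0"
    using P by (auto elim!: AE_E)
  have "space mu0 = UNIV"
    using G unfolding haar_groupoid_def quasi_invariant_def by (auto simp: sets_eq_imp_space_eq)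
  with N(1) have P_outside: "\<And>u. u \<notin> N \<Longrightarrow> P u"
    by auto
  have "AE x in induced_measure lam mu0. r x \<notin> N" "AE x in induced_measure lam mu0. d x \<notin> N"
    using AE_not_in[OF null_sets_induced_measure_vimage_range[OF G N(2)]]
      AE_not_in[OF null_sets_induced_measure_vimage_domain[OF G N(2)]] by simp_all
  then show ?thesis
    by eventually_elim (simp add: P_outside)
qed

theorem proposition5p7:
  fixes rS dS :: "'s::{t2_space,second_countable_topology} \<Rightarrow> 's" and mS :: "'s \<Rightarrow> 's \<Rightarrow> 's"
    and iS :: "'s \<Rightarrow> 's" and lamS :: "'s \<Rightarrow> 's measure" and muS0 :: "'s measure"
    and rG dG :: "'g::{t2_space,second_countable_topology} \<Rightarrow> 'g" and mG :: "'g \<Rightarrow> 'g \<Rightarrow> 'g"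
    and iG :: "'g \<Rightarrow> 'g" and lamG :: "'g \<Rightarrow> 'g measure" and muG0 :: "'g measure"
    and rT dT :: "'t::{t2_space,second_countable_topology} \<Rightarrow> 't" and mT :: "'t \<Rightarrow> 't \<Rightarrow> 't"
    and iT :: "'t \<Rightarrow> 't" and lamT :: "'t \<Rightarrow> 't measure" and muT0 :: "'t measure"
    and p :: "'s \<Rightarrow> 'g" and q :: "'t \<Rightarrow> 'g"
    and \<gamma>p \<gamma>p' :: "'g \<Rightarrow> 's measure" and \<gamma>q \<gamma>q' :: "'g \<Rightarrow> 't measure"
  assumes "haar_groupoid rS dS mS iS lamS muS0"
    and "haar_groupoid rG dG mG iG lamG muG0"
    and "haar_groupoid rT dT mT iT lamT muT0"
    and "haar_hom rS dS mS lamS muS0 rG dG mG lamG muG0 p"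
    and "haar_hom rT dT mT lamT muT0 rG dG mG lamG muG0 q"
    and "admissible_bsm rS muS0 rG muG0 p \<gamma>p"
    and "admissible_bsm rT muT0 rG muG0 q \<gamma>q"
    and "admissible_bsm rS muS0 rG muG0 p \<gamma>p'"
    and "admissible_bsm rT muT0 rG muG0 q \<gamma>q'"
  shows "\<forall>B\<in>sets borel. B \<subseteq> P0 rS rG dG rT p q \<longrightarrow>
           muP0 rG dG lamG muG0 \<gamma>p' \<gamma>q' B = muP0 rG dG lamG muG0 \<gamma>p \<gamma>q B"
proof -
  have "AE y in muG0. \<gamma>p' y = \<gamma>p y \<and> \<gamma>q' y = \<gamma>q y"
    using AE_eq_admissible_bsm[OF assms(1,2,4,6,8)] AE_eq_admissible_bsm[OF assms(3,2,5,7,9)]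
    by eventually_elim simp
  from AE_induced_measure_range_domain[OF assms(2) this]
  have eta_eq: "AE x in induced_measure lamG muG0. eta rG dG \<gamma>p' \<gamma>q' x = eta rG dG \<gamma>p \<gamma>q x"
    by eventually_elim (simp add: eta_def)
  show ?thesis
    unfolding muP0_def
    by (intro ballI impI nn_integral_cong_AE) (use eta_eq in \<open>eventually_elim, simp\<close>)
qed

end
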